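(* Assume Assumption 1, Assumption 2 and the null hypothesis $H_0:\ T_i(1)=T_i(0)$ for all $i$, and condition on $\boldsymbol{T}(1),\boldsymbol{T}(0)$. Then for every unit $i$ and time $t$, $$\mathbb{E}\{Z_i\mathbb{1}(W_i\ge t)\mid\boldsymbol{T}(1),\boldsymbol{T}(0),\mathbb{1}(W_i\ge t),\Delta_i\mathbb{1}(W_i=t)\}=\mathbb{E}\{Z_i\mathbb{1}(W_i\ge t)\mid\boldsymbol{T}(1),\boldsymbol{T}(0),\mathbb{1}(W_i\ge t)\}=\mathbb{1}(W_i\ge t)\,\phi(t).$$
   Context: There are $n$ units. Unit $i$ has potential event times $T_i(1),T_i(0)\ge 0$, potential censoring times $C_i(1),C_i(0)\in[0,\infty]$, and treatment indicator $Z_i\in\{0,1\}$; bold letters denote $n$-vectors. Assumption 1: conditional on $\boldsymbol{T}(1),\boldsymbol{T}(0),\boldsymbol{C}(1),\boldsymbol{C}(0)$, the $Z_i$ are i.i.d. Bernoulli$(p_1)$, $p_1=1-p_0\in(0,1)$. Assumption 2: $(\boldsymbol{C}(1),\boldsymbol{C}(0))$ is independent of $(\boldsymbol{T}(1),\boldsymbol{T}(0))$ and the pairs $(C_i(1),C_i(0))$ are i.i.d. across $i$. $G_z(c)=\Pr(C_i(z)\ge c)$, $\phi(t)=p_1G_1(t)/\{p_1G_1(t)+p_0G_0(t)\}$. Realized: $T_i=Z_iT_i(1)+(1-Z_i)T_i(0)$, $C_i=Z_iC_i(1)+(1-Z_i)C_i(0)$, $W_i=\min\{T_i,C_i\}$,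 $\Delta_i=\mathbb{1}(T_i\le C_i)$. *)

theory Defs
  imports "HOL-Probability.Probability"
begin

definition realT :: "bool \<Rightarrow> real \<Rightarrow> real \<Rightarrow> real" where
  "realT z t1 t0 = (if z then t1 else t0)"

definition realC :: "bool \<Rightarrow> ereal \<Rightarrow> ereal \<Rightarrow> ereal" where
  "realC z c1 c0 = (if z then c1 else c0)"

definition obsW :: "bool \<Rightarrow> real \<Rightarrow> real \<Rightarrow> ereal \<Rightarrow> ereal \<Rightarrow> ereal" where
  "obsW z t1 t0 c1 c0 = min (ereal (realT z t1 t0)) (realC z c1 c0)"

definition obsDelta :: "bool \<Rightarrow> real \<Rightarrow> real \<Rightarrow> ereal \<Rightarrow> ereal \<Rightarrow> bool" where
  "obsDelta z t1 t0 c1 c0 = (ereal (realT z t1 t0) \<le> realC z c1 c0)"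

(* phi(t) = p1 G1(t) / (p1 G1(t) + p0 G0(t)), with p0 = 1 - p1
   (Isabelle convention x / 0 = 0 when the denominator vanishes) *)
definition phi :: "real \<Rightarrow> (real \<Rightarrow> real) \<Rightarrow> (real \<Rightarrow> real) \<Rightarrow> real \<Rightarrow> real" where
  "phi p1 G1 G0 t = p1 * G1 t / (p1 * G1 t + (1 - p1) * G0 t)"

end

theory Submission
  imports Defs
begin

text \<open>Under \<open>H\<^sub>0\<close> the event time of unit \<open>i\<close> does not depend on \<open>Z\<^sub>i\<close>, so once the potential
  outcomes are fixed it is a constant \<open>\<tau>\<close>. Then \<open>\<Delta>\<^sub>i \<one>(W\<^sub>i = t)\<close> is \<open>\<one>(W\<^sub>i \<ge> t)\<close> if \<open>\<tau> = t\<close> and zero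
  otherwise, so both conditional expectations are taken with respect to the \<open>\<sigma>\<close>-algebra generated
  by the single event \<open>{W\<^sub>i \<ge> t}\<close>, and on that event they equal
  \<open>P(Z\<^sub>i, W\<^sub>i \<ge> t) / P(W\<^sub>i \<ge> t)\<close>. For \<open>t \<le> \<tau>\<close> the independence of treatment and censoring
  gives \<open>P(Z\<^sub>i, W\<^sub>i \<ge> t) = p\<^sub>1 G\<^sub>1(t)\<close> and \<open>P(W\<^sub>i \<ge> t) = p\<^sub>1 G\<^sub>1(t) + p\<^sub>0 G\<^sub>0(t)\<close>; for \<open>t > \<tau>\<close>
  both vanish.\<close>

lemma vimage_algebra_inj_comp_count_space:
  assumes "inj g"
  shows "vimage_algebra X (\<lambda>x. g (f x)) (count_space UNIV) = vimage_algebra X f (count_space UNIV)"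
proof -
  have "sets (vimage_algebra UNIV g (count_space UNIV)) = {g -` A | A. A \<in> sets (count_space UNIV)}"
    by (subst sets_vimage_algebra2) auto
  also have "\<dots> = sets (count_space UNIV)"
    using inj_vimage_image_eq[OF assms] by auto metis
  finally have "vimage_algebra X f (vimage_algebra UNIV g (count_space UNIV))
      = vimage_algebra X f (count_space UNIV)"
    by (intro vimage_algebra_cong) auto
  then show ?thesis
    by (subst (asm) vimage_algebra_vimage_algebra_eq) auto
qed

lemma subalgebra_vimage_algebra:
  assumes "f \<in> measurable M N"
  shows "subalgebra M (vimage_algebra (space M) f N)"
  unfolding subalgebra_def using sets_image_in_sets[OF refl assms] by simp

lemma sigma_sets_PiM_component_event:
  assumes "i \<in> I" "B \<in> sets (N i)"
    and X: "\<And>j \<omega>. j \<in> I \<Longrightarrow> \<omega> \<in> space M \<Longrightarrow> X j \<omega> \<in> space (N j)"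
  shows "{\<omega> \<in> space M. X i \<omega> \<in> B}
    \<in> sigma_sets (space M) {(\<lambda>\<omega>. \<lambda>j\<in>I. X j \<omega>) -` A \<inter> space M | A. A \<in> sets (Pi\<^sub>M I N)}"
proof -
  let ?A = "(\<lambda>x. x i) -` B \<inter> space (Pi\<^sub>M I N)"
  have "?A \<in> sets (Pi\<^sub>M I N)"
    using measurable_component_singleton[OF \<open>i \<in> I\<close>, of N] \<open>B \<in> sets (N i)\<close> by measurable
  moreover have "{\<omega> \<in> space M. X i \<omega> \<in> B} = (\<lambda>\<omega>. \<lambda>j\<in>I. X j \<omega>) -` ?A \<inter> space M"
    using \<open>i \<in> I\<close> X by (auto simp: space_PiM)
  ultimately show ?thesis by blast
qed

lemma obsW_ge_iff:
  "ereal t \<le> obsW z t1 t0 c1 c0 \<longleftrightarrow> t \<le> realT z t1 t0 \<and> ereal t \<le> realC z c1 c0"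
  by (simp add: obsW_def)

lemma obsDelta_obsW_eq_iff:
  "obsDelta z t1 t0 c1 c0 \<and> obsW z t1 t0 c1 c0 = ereal t
    \<longleftrightarrow> realT z t1 t0 = t \<and> ereal t \<le> obsW z t1 t0 c1 c0"
  by (auto simp: obsDelta_def obsW_def min_def)

lemma phi_mult_denom:
  assumes "0 \<le> p1" "p1 \<le> 1" "0 \<le> G1 t" "0 \<le> G0 t"
  shows "phi p1 G1 G0 t * (p1 * G1 t + (1 - p1) * G0 t) = p1 * G1 t"
proof (cases "p1 * G1 t + (1 - p1) * G0 t = 0")
  case True
  moreover have "0 \<le> p1 * G1 t" "0 \<le> (1 - p1) * G0 t"
    using assms by auto
  ultimately have "p1 * G1 t = 0" by linarith
  with True show ?thesis by (simp add: phi_def)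
qed (simp add: phi_def)

context prob_space
begin

lemma prob_Collect_not:
  assumes "{\<omega> \<in> space M. P \<omega>} \<in> events"
  shows "prob {\<omega> \<in> space M. \<not> P \<omega>} = 1 - prob {\<omega> \<in> space M. P \<omega>}"
proof -
  have "space M - {\<omega> \<in> space M. P \<omega>} = {\<omega> \<in> space M. \<not> P \<omega>}"
    by auto
  then show ?thesis
    using prob_compl[OF assms] by simp
qed

lemma prob_Collect_if:
  assumes "{\<omega> \<in> space M. Z \<omega> \<and> F1 \<omega>} \<in> events" "{\<omega> \<in> space M. \<not> Z \<omega> \<and> F0 \<omega>} \<in> events"
  shows "{\<omega> \<in> space M. if Z \<omega> then F1 \<omega> else F0 \<omega>} \<in> events"
    and "prob {\<omega> \<in> space M. if Z \<omega> then F1 \<omega> else F0 \<omega>}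
      = prob {\<omega> \<in> space M. Z \<omega> \<and> F1 \<omega>} + prob {\<omega> \<in> space M. \<not> Z \<omega> \<and> F0 \<omega>}"
proof -
  have split: "{\<omega> \<in> space M. if Z \<omega> then F1 \<omega> else F0 \<omega>}
      = {\<omega> \<in> space M. Z \<omega> \<and> F1 \<omega>} \<union> {\<omega> \<in> space M. \<not> Z \<omega> \<and> F0 \<omega>}"
    by auto
  show "{\<omega> \<in> space M. if Z \<omega> then F1 \<omega> else F0 \<omega>} \<in> events"
    unfolding split using assms by blast
  show "prob {\<omega> \<in> space M. if Z \<omega> then F1 \<omega> else F0 \<omega>}
      = prob {\<omega> \<in> space M. Z \<omega> \<and> F1 \<omega>} + prob {\<omega> \<in> space M. \<not> Z \<omega> \<and> F0 \<omega>}"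
    unfolding split using assms by (auto intro: finite_measure_Union)
qed

lemma indep_set_PiM_component_events:
  assumes indep: "indep_set
      (sigma_sets (space M) {(\<lambda>\<omega>. \<lambda>j\<in>I. X j \<omega>) -` A \<inter> space M | A. A \<in> sets (Pi\<^sub>M I N)})
      (sigma_sets (space M) {(\<lambda>\<omega>. \<lambda>j\<in>I. Y j \<omega>) -` A \<inter> space M | A. A \<in> sets (Pi\<^sub>M I K)})"
    and "i \<in> I" "B \<in> sets (N i)" "B' \<in> sets (K i)"
    and "\<And>j \<omega>. j \<in> I \<Longrightarrow> \<omega> \<in> space M \<Longrightarrow> X j \<omega> \<in> space (N j)"
    and "\<And>j \<omega>. j \<in> I \<Longrightarrow> \<omega> \<in> space M \<Longrightarrow> Y j \<omega> \<in> space (K j)"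
  shows "{\<omega> \<in> space M. X i \<omega> \<in> B} \<in> events"
    and "{\<omega> \<in> space M. X i \<omega> \<in> B \<and> Y i \<omega> \<in> B'} \<in> events"
    and "prob {\<omega> \<in> space M. X i \<omega> \<in> B \<and> Y i \<omega> \<in> B'}
      = prob {\<omega> \<in> space M. X i \<omega> \<in> B} * prob {\<omega> \<in> space M. Y i \<omega> \<in> B'}"
proof -
  have X_event: "{\<omega> \<in> space M. X i \<omega> \<in> B}
      \<in> sigma_sets (space M) {(\<lambda>\<omega>. \<lambda>j\<in>I. X j \<omega>) -` A \<inter> space M | A. A \<in> sets (Pi\<^sub>M I N)}"
    by (rule sigma_sets_PiM_component_event) (use assms in auto)
  have Y_event: "{\<omega> \<in> space M. Y i \<omega> \<in> B'}
      \<in> sigma_sets (space M) {(\<lambda>\<omega>. \<lambda>j\<in>I. Y j \<omega>) -` A \<inter> space M | A. A \<in> sets (Pi\<^sub>M I K)}"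
    by (rule sigma_sets_PiM_component_event) (use assms in auto)
  have conj: "{\<omega> \<in> space M. X i \<omega> \<in> B \<and> Y i \<omega> \<in> B'}
      = {\<omega> \<in> space M. X i \<omega> \<in> B} \<inter> {\<omega> \<in> space M. Y i \<omega> \<in> B'}"
    by auto
  show "{\<omega> \<in> space M. X i \<omega> \<in> B} \<in> events"
    using indep_setD_ev1[OF indep] X_event by auto
  show "{\<omega> \<in> space M. X i \<omega> \<in> B \<and> Y i \<omega> \<in> B'} \<in> events"
    unfolding conj using indep_setD_ev1[OF indep] indep_setD_ev2[OF indep] X_event Y_event by auto
  show "prob {\<omega> \<in> space M. X i \<omega> \<in> B \<and> Y i \<omega> \<in> B'}
      = prob {\<omega> \<in> space M. X i \<omega> \<in> B} * prob {\<omega> \<in> space M. Y i \<omega> \<in> B'}"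
    unfolding conj by (rule indep_setD[OF indep X_event Y_event])
qed

lemma prob_treatment_arm_uncensored:
  fixes Z :: "'i \<Rightarrow> 'a \<Rightarrow> bool" and C1 C0 :: "'i \<Rightarrow> 'a \<Rightarrow> ereal"
  assumes indep: "indep_set
      (sigma_sets (space M) {(\<lambda>\<omega>. \<lambda>j\<in>I. Z j \<omega>) -` A \<inter> space M | A.
        A \<in> sets (Pi\<^sub>M I (\<lambda>_. count_space UNIV))})
      (sigma_sets (space M) {(\<lambda>\<omega>. \<lambda>j\<in>I. (C1 j \<omega>, C0 j \<omega>)) -` A \<inter> space M | A.
        A \<in> sets (Pi\<^sub>M I (\<lambda>_. borel))})"
    and "i \<in> I"
  shows "{\<omega> \<in> space M. Z i \<omega> \<and> c \<le> C1 i \<omega>} \<in> events"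
    and "prob {\<omega> \<in> space M. Z i \<omega> \<and> c \<le> C1 i \<omega>}
      = prob {\<omega> \<in> space M. Z i \<omega>} * prob {\<omega> \<in> space M. c \<le> C1 i \<omega>}"
    and "{\<omega> \<in> space M. \<not> Z i \<omega> \<and> c \<le> C0 i \<omega>} \<in> events"
    and "prob {\<omega> \<in> space M. \<not> Z i \<omega> \<and> c \<le> C0 i \<omega>}
      = (1 - prob {\<omega> \<in> space M. Z i \<omega>}) * prob {\<omega> \<in> space M. c \<le> C0 i \<omega>}"
proof -
  have fst_closed: "{p :: ereal \<times> ereal. c \<le> fst p} \<in> sets borel"
    and snd_closed: "{p :: ereal \<times> ereal. c \<le> snd p} \<in> sets borel"
    by (intro borel_closed closed_Collect_le continuous_intros)+
  note component_events = indep_set_PiM_component_events[OF indep \<open>i \<in> I\<close>]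
  note treated = component_events[where B="{True}", OF _ fst_closed, simplified]
    and control = component_events[where B="{False}", OF _ snd_closed, simplified]
  then show "{\<omega> \<in> space M. Z i \<omega> \<and> c \<le> C1 i \<omega>} \<in> events"
    "prob {\<omega> \<in> space M. Z i \<omega> \<and> c \<le> C1 i \<omega>}
      = prob {\<omega> \<in> space M. Z i \<omega>} * prob {\<omega> \<in> space M. c \<le> C1 i \<omega>}"
    "{\<omega> \<in> space M. \<not> Z i \<omega> \<and> c \<le> C0 i \<omega>} \<in> events"
    "prob {\<omega> \<in> space M. \<not> Z i \<omega> \<and> c \<le> C0 i \<omega>}
      = (1 - prob {\<omega> \<in> space M. Z i \<omega>}) * prob {\<omega> \<in> space M. c \<le> C0 i \<omega>}"
    using prob_Collect_not[OF treated(1)] by simp_all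
qed

lemma real_cond_exp_generated_by_event:
  assumes P: "{\<omega> \<in> space M. P \<omega>} \<in> events" and QP: "{\<omega> \<in> space M. Q \<omega> \<and> P \<omega>} \<in> events"
    and ratio: "prob {\<omega> \<in> space M. Q \<omega> \<and> P \<omega>} = c * prob {\<omega> \<in> space M. P \<omega>}"
  shows "AE \<omega> in M. real_cond_exp M (vimage_algebra (space M) P (count_space UNIV))
      (\<lambda>\<omega>. of_bool (Q \<omega>) * of_bool (P \<omega>)) \<omega> = of_bool (P \<omega>) * c"
proof -
  let ?F = "vimage_algebra (space M) P (count_space UNIV)"
  let ?f = "\<lambda>\<omega>. of_bool (Q \<omega>) * of_bool (P \<omega>) :: real"
  let ?g = "\<lambda>\<omega>. of_bool (P \<omega>) * c"
  have P_meas: "P \<in> measurable M (count_space UNIV)"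
    using P pred_def by blast
  interpret finite_measure_subalgebra M ?F
    by unfold_locales (rule subalgebra_vimage_algebra[OF P_meas])
  have set_integral_f: "(\<integral>\<omega>\<in>A. ?f \<omega> \<partial>M) = prob (A \<inter> {\<omega> \<in> space M. Q \<omega> \<and> P \<omega>})"
    if "A \<in> events" for A
  proof -
    have "(\<integral>\<omega>\<in>A. ?f \<omega> \<partial>M) = (\<integral>\<omega>. indicator (A \<inter> {\<omega> \<in> space M. Q \<omega> \<and> P \<omega>}) \<omega> \<partial>M)"
      unfolding set_lebesgue_integral_def
      by (intro Bochner_Integration.integral_cong) (auto simp: indicator_def)
    then show ?thesis
      using that QP by (simp add: emeasure_finite)
  qed
  have set_integral_g: "(\<integral>\<omega>\<in>A. ?g \<omega> \<partial>M) = c * prob (A \<inter> {\<omega> \<in> space M. P \<omega>})"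
    if "A \<in> events" for A
  proof -
    have "(\<integral>\<omega>\<in>A. ?g \<omega> \<partial>M) = (\<integral>\<omega>. c * indicator (A \<inter> {\<omega> \<in> space M. P \<omega>}) \<omega> \<partial>M)"
      unfolding set_lebesgue_integral_def
      by (intro Bochner_Integration.integral_cong) (auto simp: indicator_def)
    then show ?thesis
      using that P by (simp add: emeasure_finite)
  qed
  show ?thesis
  proof (rule real_cond_exp_charact)
    fix A assume "A \<in> sets ?F"
    then obtain B where A: "A = P -` B \<inter> space M"
      by (auto simp: sets_vimage_algebra2)
    then have A_ev: "A \<in> events"
      using measurable_sets[OF P_meas] by auto
    have "A \<inter> {\<omega> \<in> space M. P \<omega>} = (if True \<in> B then {\<omega> \<in> space M. P \<omega>} else {})"
      and "A \<inter> {\<omega> \<in> space M. Q \<omega> \<and> P \<omega>} = (if True \<in> B then {\<omega> \<in> space M. Q \<omega> \<and> P \<omega>} else {})"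
      by (auto simp: A)
    then show "(\<integral>\<omega>\<in>A. ?f \<omega> \<partial>M) = (\<integral>\<omega>\<in>A. ?g \<omega> \<partial>M)"
      unfolding set_integral_f[OF A_ev] set_integral_g[OF A_ev] using ratio by simp
  next
    show "integrable M ?f"
      using QP by (intro Bochner_Integration.integrable_cong[THEN iffD1, OF refl _
          integrable_real_indicator])
        (auto simp: indicator_def emeasure_finite less_top[symmetric])
  next
    show "integrable M ?g"
      using P by (intro Bochner_Integration.integrable_cong[THEN iffD1, OF refl _
          integrable_mult_left[OF integrable_real_indicator]])
        (auto simp: indicator_def emeasure_finite less_top[symmetric])
  next
    have "P \<in> measurable ?F (count_space UNIV)"
      by (rule measurable_vimage_algebra1) auto
    then show "?g \<in> borel_measurable ?F"
      by measurable
  qed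
qed

end

theorem lemmaA1:
  fixes M :: "'a measure" and n :: nat and p1 :: real
    and T1 T0 :: "nat \<Rightarrow> real"
    and Z :: "nat \<Rightarrow> 'a \<Rightarrow> bool"
    and C1 C0 :: "nat \<Rightarrow> 'a \<Rightarrow> ereal"
    and G1 G0 :: "real \<Rightarrow> real"
    and i :: nat and t :: real
  assumes prob: "prob_space M"
    and p1: "0 < p1" "p1 < 1"
    and T_nonneg: "\<And>j. j < n \<Longrightarrow> 0 \<le> T1 j \<and> 0 \<le> T0 j"
    and C_nonneg: "\<And>j \<omega>. j < n \<Longrightarrow> \<omega> \<in> space M \<Longrightarrow> 0 \<le> C1 j \<omega> \<and> 0 \<le> C0 j \<omega>"
    \<comment> \<open>Assumption 1 (together with the independence part of Assumption 2):
        the Z_i are independent Bernoulli(p1), independent of the censoring times\<close>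
    and Z_indep: "prob_space.indep_vars M (\<lambda>_. count_space UNIV) Z {..<n}"
    and Z_bern: "\<And>j. j < n \<Longrightarrow> prob_space.prob M {\<omega> \<in> space M. Z j \<omega>} = p1"
    and ZC_indep: "prob_space.indep_set M
        (sigma_sets (space M) {(\<lambda>\<omega>. \<lambda>j\<in>{..<n}. Z j \<omega>) -` A \<inter> space M | A.
            A \<in> sets (Pi\<^sub>M {..<n} (\<lambda>_. count_space UNIV))})
        (sigma_sets (space M) {(\<lambda>\<omega>. \<lambda>j\<in>{..<n}. (C1 j \<omega>, C0 j \<omega>)) -` A \<inter> space M | A.
            A \<in> sets (Pi\<^sub>M {..<n} (\<lambda>_. borel))})"
    \<comment> \<open>Assumption 2: the pairs (C_i(1), C_i(0)) are i.i.d. across units\<close>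
    and C_indep: "prob_space.indep_vars M (\<lambda>_. borel) (\<lambda>j \<omega>. (C1 j \<omega>, C0 j \<omega>)) {..<n}"
    and C_ident: "\<And>j k. j < n \<Longrightarrow> k < n \<Longrightarrow>
        distr M borel (\<lambda>\<omega>. (C1 j \<omega>, C0 j \<omega>)) = distr M borel (\<lambda>\<omega>. (C1 k \<omega>, C0 k \<omega>))"
    and G1_def: "\<And>j c. j < n \<Longrightarrow> G1 c = prob_space.prob M {\<omega> \<in> space M. C1 j \<omega> \<ge> ereal c}"
    and G0_def: "\<And>j c. j < n \<Longrightarrow> G0 c = prob_space.prob M {\<omega> \<in> space M. C0 j \<omega> \<ge> ereal c}"
    \<comment> \<open>null hypothesis H0\<close>
    and H0: "\<And>j. j < n \<Longrightarrow> T1 j = T0 j"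
    and i: "i < n"
  defines "W \<equiv> \<lambda>\<omega>. obsW (Z i \<omega>) (T1 i) (T0 i) (C1 i \<omega>) (C0 i \<omega>)"
    and "D \<equiv> \<lambda>\<omega>. obsDelta (Z i \<omega>) (T1 i) (T0 i) (C1 i \<omega>) (C0 i \<omega>)"
  shows "AE \<omega> in M.
      real_cond_exp M
        (vimage_algebra (space M) (\<lambda>\<omega>. (W \<omega> \<ge> ereal t, D \<omega> \<and> W \<omega> = ereal t)) (count_space UNIV))
        (\<lambda>\<omega>. of_bool (Z i \<omega>) * of_bool (W \<omega> \<ge> ereal t)) \<omega>
    = real_cond_exp M
        (vimage_algebra (space M) (\<lambda>\<omega>. W \<omega> \<ge> ereal t) (count_space UNIV))
        (\<lambda>\<omega>. of_bool (Z i \<omega>) * of_bool (W \<omega> \<ge> ereal t)) \<omega>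
    \<and> real_cond_exp M
        (vimage_algebra (space M) (\<lambda>\<omega>. W \<omega> \<ge> ereal t) (count_space UNIV))
        (\<lambda>\<omega>. of_bool (Z i \<omega>) * of_bool (W \<omega> \<ge> ereal t)) \<omega>
      = of_bool (W \<omega> \<ge> ereal t) * phi p1 G1 G0 t"
proof -
  interpret prob_space M by (rule prob)
  have T_fixed: "realT z (T1 i) (T0 i) = T1 i" for z
    using H0[OF i] by (simp add: realT_def)
  have sigma_eq:
    "vimage_algebra (space M) (\<lambda>\<omega>. (W \<omega> \<ge> ereal t, D \<omega> \<and> W \<omega> = ereal t)) (count_space UNIV)
      = vimage_algebra (space M) (\<lambda>\<omega>. W \<omega> \<ge> ereal t) (count_space UNIV)"
    using vimage_algebra_inj_comp_count_space[of "\<lambda>b. (b, T1 i = t \<and> b)"]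
    by (simp add: W_def D_def obsDelta_obsW_eq_iff T_fixed inj_on_def)
  from i have "i \<in> {..<n}" by simp
  note arms = prob_treatment_arm_uncensored[OF ZC_indep this, of "ereal t"]
  have treated: "{\<omega> \<in> space M. Z i \<omega> \<and> ereal t \<le> C1 i \<omega>} \<in> events"
    "prob {\<omega> \<in> space M. Z i \<omega> \<and> ereal t \<le> C1 i \<omega>} = p1 * G1 t"
    and control: "{\<omega> \<in> space M. \<not> Z i \<omega> \<and> ereal t \<le> C0 i \<omega>} \<in> events"
    "prob {\<omega> \<in> space M. \<not> Z i \<omega> \<and> ereal t \<le> C0 i \<omega>} = (1 - p1) * G0 t"
    using arms Z_bern[OF i] G1_def[OF i, of t] G0_def[OF i, of t] by simp_all
  have treated_at_risk: "{\<omega> \<in> space M. Z i \<omega> \<and> W \<omega> \<ge> ereal t}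
      = (if t \<le> T1 i then {\<omega> \<in> space M. Z i \<omega> \<and> ereal t \<le> C1 i \<omega>} else {})"
    and at_risk: "{\<omega> \<in> space M. W \<omega> \<ge> ereal t}
      = (if t \<le> T1 i then {\<omega> \<in> space M. if Z i \<omega> then ereal t \<le> C1 i \<omega> else ereal t \<le> C0 i \<omega>} else {})"
    by (auto simp: W_def obsW_ge_iff T_fixed realC_def)
  have "G1 t \<ge> 0" "G0 t \<ge> 0"
    using G1_def[OF i] G0_def[OF i] by simp_all
  then have "prob {\<omega> \<in> space M. Z i \<omega> \<and> W \<omega> \<ge> ereal t}
      = phi p1 G1 G0 t * prob {\<omega> \<in> space M. W \<omega> \<ge> ereal t}"
    using phi_mult_denom[of p1 G1 t G0] p1 treated control
    by (simp add: treated_at_risk at_risk prob_Collect_if)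
  moreover have "{\<omega> \<in> space M. W \<omega> \<ge> ereal t} \<in> events"
    and "{\<omega> \<in> space M. Z i \<omega> \<and> W \<omega> \<ge> ereal t} \<in> events"
    using treated prob_Collect_if(1)[OF treated(1) control(1)]
    by (simp_all add: treated_at_risk at_risk)
  ultimately show ?thesis
    using real_cond_exp_generated_by_event[of "\<lambda>\<omega>. W \<omega> \<ge> ereal t" "Z i"] sigma_eq
    by simp
qed

end
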